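(* Let $R_e\approx1.4877$ be the unique positive root of $\frac{10}{7(R+1)}-\frac{R^2\sqrt{R}}{R^2+R+1}=0$. Then for all $0<x,y,z<R_e$, $$-\tfrac{10}{7}\sqrt{y}\,d_1(y,z)-\sqrt{yz}\,d_2(y,z)-\sqrt{xy}\,d_2(x,y)>0 .$$
   Context: For $x,y\ge0$: $d_1(x,y)=-\frac{x}{1+x}-\frac{xy}{1+y+xy}-\frac{xy^2}{1+y+xy}\frac{1+x}{1+y}$ and $d_2(x,y)=\frac{xy^2}{1+y+xy}\frac{1+x}{1+y}$. *)

theory Defs
  imports Complex_Main
begin

definition d1 :: "real \<Rightarrow> real \<Rightarrow> real" where
  "d1 x y = - x / (1 + x) - x * y / (1 + y + x * y)
            - (x * y^2 / (1 + y + x * y)) * ((1 + x) / (1 + y))"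

definition d2 :: "real \<Rightarrow> real \<Rightarrow> real" where
  "d2 x y = (x * y^2 / (1 + y + x * y)) * ((1 + x) / (1 + y))"

definition Re_poly :: "real \<Rightarrow> real" where
  "Re_poly R = 10 / (7 * (R + 1)) - R^2 * sqrt R / (R^2 + R + 1)"

definition R_e :: real where
  "R_e = (THE R. R > 0 \<and> Re_poly R = 0)"

end

theory Submission
  imports Defs
begin

(* Up to the factor sqrt y, the expression is
     10/7 * (y/(1+y) + yz/(1+z+yz)) + (10/7 - sqrt z) * d2 y z - sqrt x * d2 x y.
   Writing sqrt x * d2 x y = x sqrt x / (1 + 1/((1+x) y)) * y/(1+y), the first factor is
   increasing in x and y and equals exactly 10/7 at x = y = R_e: this is the defining
   equation of R_e.  Hence the last term is dominated by 10/7 * y/(1+y), and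
   sqrt z < 10/7 because R_e < 2 < (10/7)^2. *)

lemma Re_poly_eq:
  assumes "0 < R"
  shows "Re_poly R = 10 / (7 * (R + 1)) - sqrt R / (1 + 1 / R + 1 / R^2)"
  using assms unfolding Re_poly_def by (simp add: field_simps power2_eq_square)

lemma Re_poly_strict_antimono:
  assumes "0 < a" "a < b"
  shows "Re_poly b < Re_poly a"
proof -
  have "1 / b + 1 / b^2 \<le> 1 / a + 1 / a^2"
    using assms by (intro add_mono divide_left_mono power_mono) auto
  then have "sqrt a / (1 + 1 / a + 1 / a^2) < sqrt b / (1 + 1 / b + 1 / b^2)"
    using assms by (intro frac_less) (auto simp: add_pos_pos)
  moreover have "10 / (7 * (b + 1)) < 10 / (7 * (a + 1))"
    using assms by (simp add: divide_simps)
  ultimately show ?thesis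
    using assms by (simp add: Re_poly_eq add_pos_nonneg)
qed

lemma continuous_on_Re_poly: "continuous_on {0..} Re_poly"
proof -
  have "x^2 + x + 1 \<noteq> 0" if "0 \<le> x" for x :: real
    using that zero_le_power2[of x] by linarith
  then show ?thesis
    unfolding Re_poly_def by (auto intro!: continuous_intros)
qed

lemma Re_poly_1_pos: "0 < Re_poly 1"
  unfolding Re_poly_def by simp

lemma Re_poly_2_neg: "Re_poly 2 < 0"
proof -
  have "5 / 6 < sqrt (2 :: real)"
    by (rule real_less_rsqrt) (simp add: power2_eq_square)
  then show ?thesis
    unfolding Re_poly_def by simp
qed

lemma R_e_root: "0 < R_e" "Re_poly R_e = 0"
proof -
  obtain r where r: "1 \<le> r" "r \<le> 2" "Re_poly r = 0"
    using IVT2'[of Re_poly 2 0 1] Re_poly_1_pos Re_poly_2_neg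
      continuous_on_subset[OF continuous_on_Re_poly, of "{1..2}"] by force
  have "R = r" if "0 < R" "Re_poly R = 0" for R
    using Re_poly_strict_antimono[of R r] Re_poly_strict_antimono[of r R] that r
    by (cases R r rule: linorder_cases) auto
  then have "R_e = r"
    unfolding R_e_def using r by (intro the_equality) auto
  with r show "0 < R_e" "Re_poly R_e = 0" by auto
qed

lemma R_e_less_2: "R_e < 2"
  using Re_poly_strict_antimono[of 2 R_e] R_e_root Re_poly_2_neg
  by (cases R_e "2 :: real" rule: linorder_cases) auto

lemma R_e_equation: "R_e * sqrt R_e / (1 + 1 / ((1 + R_e) * R_e)) = 10 / 7"
proof -
  have "10 / (7 * (R_e + 1)) = R_e^2 * sqrt R_e / (R_e^2 + R_e + 1)"
    using R_e_root unfolding Re_poly_def by simp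
  moreover have "1 + 1 / ((1 + R_e) * R_e) = (R_e^2 + R_e + 1) / ((1 + R_e) * R_e)"
    using mult_pos_pos[of "1 + R_e" R_e] R_e_root(1) by (simp add: field_simps power2_eq_square)
  ultimately show ?thesis
    using R_e_root(1) by (simp add: field_simps power2_eq_square)
qed

lemma d1_eq_d2: "d1 x y = - x / (1 + x) - x * y / (1 + y + x * y) - d2 x y"
  unfolding d1_def d2_def by simp

lemma d2_pos:
  assumes "0 < x" "0 < y"
  shows "0 < d2 x y"
  unfolding d2_def using assms by (simp add: add_pos_pos)

lemma sqrt_mult_d2_eq:
  assumes "0 < x" "0 < y"
  shows "sqrt x * d2 x y = x * sqrt x / (1 + 1 / ((1 + x) * y)) * (y / (1 + y))"
proof -
  have "1 + 1 / ((1 + x) * y) = (1 + y + x * y) / ((1 + x) * y)"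
    using mult_pos_pos[of "1 + x" y] assms by (simp add: field_simps)
  then show ?thesis
    using assms unfolding d2_def by (simp add: field_simps power2_eq_square)
qed

lemma d2_factor_strict_mono:
  assumes "0 < x" "x < R" "0 < y" "y < R"
  shows "x * sqrt x / (1 + 1 / ((1 + x) * y)) < R * sqrt R / (1 + 1 / ((1 + R) * R))"
proof (rule frac_less)
  show "x * sqrt x < R * sqrt R"
    using assms by (intro mult_strict_mono) auto
  have "(1 + x) * y \<le> (1 + R) * R"
    using assms by (intro mult_mono) auto
  then show "1 + 1 / ((1 + R) * R) \<le> 1 + 1 / ((1 + x) * y)"
    using assms by (simp add: divide_left_mono)
qed (use assms in \<open>auto simp: add_pos_pos\<close>)

lemma sqrt_mult_d2_less:
  assumes "0 < x" "x < R_e" "0 < y" "y < R_e"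
  shows "sqrt x * d2 x y < 10 / 7 * (y / (1 + y))"
  using mult_strict_right_mono[OF d2_factor_strict_mono[OF assms], of "y / (1 + y)"] assms
  by (simp add: sqrt_mult_d2_eq R_e_equation)

lemma sqrt_less_10_7:
  assumes "0 \<le> z" "z < R_e"
  shows "sqrt z < 10 / 7"
proof -
  have "z < (10 / 7)^2"
    using assms R_e_less_2 by (simp add: power2_eq_square)
  then show ?thesis
    using real_sqrt_less_mono by fastforce
qed

theorem lemmaA1:
  fixes x y z :: real
  assumes "0 < x" "x < R_e" "0 < y" "y < R_e" "0 < z" "z < R_e"
  shows "- (10/7) * sqrt y * d1 y z - sqrt (y * z) * d2 y z - sqrt (x * y) * d2 x y > 0"
proof -
  have "- (10/7) * sqrt y * d1 y z - sqrt (y * z) * d2 y z - sqrt (x * y) * d2 x y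
      = sqrt y * ((10/7 * (y / (1 + y)) - sqrt x * d2 x y)
                  + 10/7 * (y * z / (1 + z + y * z)) + (10/7 - sqrt z) * d2 y z)"
    by (simp add: d1_eq_d2 real_sqrt_mult algebra_simps)
  also have "\<dots> > 0"
  proof -
    have "0 < 10/7 * (y / (1 + y)) - sqrt x * d2 x y"
      using sqrt_mult_d2_less assms by simp
    moreover have "0 < 10/7 * (y * z / (1 + z + y * z))"
      using assms by (simp add: add_pos_pos)
    moreover have "0 < (10/7 - sqrt z) * d2 y z"
      using sqrt_less_10_7 d2_pos assms by simp
    ultimately show ?thesis
      using assms by (metis add_pos_pos mult_pos_pos real_sqrt_gt_zero)
  qed
  finally show ?thesis .
qed

end
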